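(* Consider $\min_u F(u)+G(u)$ under the assumptions below, with $G$ convex and $F+G$ strongly convex. Let $\{(y^t,z^t,x^t)\}$ be generated by the modified PR iteration with $\gamma\in(0,\frac1{12L_F})$. Then $(y^t,z^t,x^t)$ converges to some $(\bar y,\bar z,\bar x)$ with $\bar y=\bar z$ and $\bar z$ the unique minimizer of $F+G$, and the convergence is linear: there exist $M>0$ and $r\in(0,1)$ such that for all $t\ge1$, \[ \max\{\|y^t-\bar y\|^2,\|z^t-\bar z\|^2,\|x^t-\bar x\|^2\}\le M r^t . \]
   Context: Assumptions: $F:\mathbb{R}^n\to\mathbb{R}$ is convex and differentiable with $\nabla F$ Lipschitz continuous with modulus at most $L_F>0$; $G:\mathbb{R}^n\to(-\infty,\infty]$ is proper, lower semicontinuous, and $\operatorname{Argmin}_u\{\tau G(u)+\frac12\|u-w\|^2\}$ is nonempty for every $w$ and every $\tau>0$; $F+G$ is coercive. Modified PR iteration: given $x^0$ and $\gamma\in(0,\frac1{12L_F})$, for $t=0,1,\dots$: $y^{t+1}=\operatorname{argmin}_y\{F(y)+\frac{5L_F}{2}\|y\|^2+\frac1{2\gamma}\|y-x^t\|^2\}$; $z^{t+1}\in\operatorname{Argmin}_z\{G(z)-\frac{5L_F}{2}\|z\|^2+\frac1{2\gamma}\|2y^{t+1}-x^t-z\|^2\}$; $x^{t+1}=x^t+2(z^{t+1}-y^{t+1})$. *)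

theory Defs
  imports "HOL-Analysis.Analysis"
begin

definition proper_fun :: "('a \<Rightarrow> ereal) \<Rightarrow> bool" where
  "proper_fun G \<longleftrightarrow> (\<forall>u. G u \<noteq> -\<infinity>) \<and> (\<exists>u. G u \<noteq> \<infinity>)"

definition lsc_fun :: "('a::topological_space \<Rightarrow> ereal) \<Rightarrow> bool" where
  "lsc_fun G \<longleftrightarrow> (\<forall>x c. c < G x \<longrightarrow> (\<forall>\<^sub>F u in nhds x. c < G u))"

definition ext_convex :: "('a::real_vector \<Rightarrow> ereal) \<Rightarrow> bool" where
  "ext_convex G \<longleftrightarrow> (\<forall>x y (l::real). 0 < l \<and> l < 1 \<longrightarrow>
      G ((1 - l) *\<^sub>R x + l *\<^sub>R y) \<le> ereal (1 - l) * G x + ereal l * G y)"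

definition ext_strongly_convex :: "('a::real_normed_vector \<Rightarrow> ereal) \<Rightarrow> bool" where
  "ext_strongly_convex H \<longleftrightarrow> (\<exists>\<mu>>0. \<forall>x y (l::real). 0 < l \<and> l < 1 \<longrightarrow>
      H ((1 - l) *\<^sub>R x + l *\<^sub>R y) + ereal (\<mu> / 2 * l * (1 - l) * (norm (x - y))\<^sup>2)
        \<le> ereal (1 - l) * H x + ereal l * H y)"

definition Argmin :: "('a \<Rightarrow> 'b::order) \<Rightarrow> 'a set" where
  "Argmin f = {u. \<forall>v. f u \<le> f v}"

definition coercive :: "('a::real_normed_vector \<Rightarrow> ereal) \<Rightarrow> bool" where
  "coercive H \<longleftrightarrow> (H \<longlongrightarrow> \<infinity>) at_infinity"

end

theory Submission
  imports Defs
begin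

text \<open>Let u be the minimizer of F + G (it exists by coercivity and lower semicontinuity, and it
is unique since strong convexity of F + G gives quadratic growth around it), and let
xb = u + \<gamma> (\<nabla>F u + 5 L u), the point that the y-update maps to u. The y-update is the
identity x = y + \<gamma> (\<nabla>F y + 5 L y), and the z-update exhibits a subgradient of G at z.
Comparing one step with the fixed point, cocoercivity of \<nabla>F, monotonicity of the
subdifferential of G and the quadratic growth of F + G show that the decrease
|x - xb|^2 - |x' - xb|^2 dominates a fixed multiple of |y' - z'|^2 + |\<nabla>F y' - \<nabla>F u|^2 + |z' - u|^2,
which in turn dominates |x - xb|^2. Hence x converges linearly to xb, and y and z, being
controlled by the previous x, converge linearly to u.\<close>

section \<open>Smooth convex functions\<close>

lemma directional_derivative_le:
  fixes \<phi> :: "'a::real_normed_vector \<Rightarrow> real"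
  assumes deriv: "(\<phi> has_derivative \<phi>') (at z)"
    and slope: "\<And>s. 0 < s \<Longrightarrow> s < 1 \<Longrightarrow> \<phi> (z + s *\<^sub>R d) - \<phi> z \<le> s * C"
  shows "\<phi>' d \<le> C"
proof -
  define h where "h s = \<phi> (z + s *\<^sub>R d)" for s :: real
  have "(h has_derivative (\<lambda>s. \<phi>' (s *\<^sub>R d))) (at 0)"
    unfolding h_def using deriv
    by (auto intro!: derivative_eq_intros has_derivative_compose[of "\<lambda>s. z + s *\<^sub>R d", where g = \<phi>])
  moreover have "(\<lambda>s. \<phi>' (s *\<^sub>R d)) = (*) (\<phi>' d)"
    using linear_scale[OF has_derivative_linear[OF deriv]] by (simp add: fun_eq_iff)
  ultimately have "(h has_real_derivative \<phi>' d) (at 0 within {0<..})"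
    by (simp add: has_field_derivative_def mult.commute has_derivative_at_withinI)
  hence "((\<lambda>s. (h s - h 0) / (s - 0)) \<longlongrightarrow> \<phi>' d) (at_right 0)"
    by (simp add: has_field_derivative_iff)
  moreover have "\<forall>\<^sub>F s in at_right 0. (h s - h 0) / (s - 0) \<le> C"
    using eventually_at_right_real[OF zero_less_one]
    by eventually_elim (auto simp: h_def pos_divide_le_eq mult.commute intro: slope)
  ultimately show ?thesis by (rule tendsto_upperbound[OF _ _ trivial_limit_at_right_real])
qed

lemma convex_on_gradient_inequality:
  fixes F :: "'a::real_normed_vector \<Rightarrow> real"
  assumes convex: "convex_on UNIV F" and deriv: "(F has_derivative F') (at u)"
  shows "F u + F' (v - u) \<le> F v"
proof -
  have "F' (v - u) \<le> F v - F u"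
  proof (rule directional_derivative_le[OF deriv])
    fix s :: real assume s: "0 < s" "s < 1"
    have "F ((1 - s) *\<^sub>R u + s *\<^sub>R v) \<le> (1 - s) * F u + s * F v"
      using s by (intro convex_onD[OF convex]) auto
    moreover have "(1 - s) *\<^sub>R u + s *\<^sub>R v = u + s *\<^sub>R (v - u)"
      by (simp add: algebra_simps)
    ultimately show "F (u + s *\<^sub>R (v - u)) - F u \<le> s * (F v - F u)"
      by (simp add: algebra_simps)
  qed
  thus ?thesis by simp
qed

lemma descent_lemma:
  fixes F :: "'a::real_inner \<Rightarrow> real"
  assumes F_grad: "\<And>u. (F has_derivative (\<lambda>h. gradF u \<bullet> h)) (at u)"
    and F_lip: "\<And>u v. norm (gradF u - gradF v) \<le> L * norm (u - v)"
    and L0: "0 \<le> L"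
  shows "F v \<le> F u + gradF u \<bullet> (v - u) + L * (norm (v - u))\<^sup>2"
proof -
  define h where "h t = F (u + t *\<^sub>R (v - u))" for t :: real
  have deriv: "(h has_derivative (\<lambda>s. gradF (u + t *\<^sub>R (v - u)) \<bullet> (s *\<^sub>R (v - u)))) (at t within {0..1})" for t
    unfolding h_def
    by (rule has_derivative_at_withinI, rule has_derivative_compose[OF _ F_grad])
       (auto intro!: derivative_eq_intros)
  then obtain t where t: "t \<in> {0<..<1}" and eq: "h 1 - h 0 = gradF (u + t *\<^sub>R (v - u)) \<bullet> (v - u)"
    using mvt_simple[of 0 1 h, OF _ deriv] by auto
  have "F v - F u - gradF u \<bullet> (v - u) = (gradF (u + t *\<^sub>R (v - u)) - gradF u) \<bullet> (v - u)"
    using eq by (simp add: h_def inner_diff_left)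
  also have "\<dots> \<le> norm (gradF (u + t *\<^sub>R (v - u)) - gradF u) * norm (v - u)"
    by (rule norm_cauchy_schwarz)
  also have "\<dots> \<le> L * norm (t *\<^sub>R (v - u)) * norm (v - u)"
    using F_lip[of "u + t *\<^sub>R (v - u)" u] by (intro mult_right_mono) auto
  also have "\<dots> \<le> L * norm (v - u) * norm (v - u)"
    using t L0 by (intro mult_right_mono mult_left_mono) (auto intro!: mult_left_le_one_le)
  finally show ?thesis by (simp add: power2_eq_square)
qed

lemma lipschitz_gradient_bregman_lower_bound:
  fixes F :: "'a::real_inner \<Rightarrow> real"
  assumes F_convex: "convex_on UNIV F"
    and F_grad: "\<And>u. (F has_derivative (\<lambda>h. gradF u \<bullet> h)) (at u)"
    and F_lip: "\<And>u v. norm (gradF u - gradF v) \<le> L * norm (u - v)"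
    and L_pos: "0 < L"
  shows "(norm (gradF y - gradF u))\<^sup>2 / (4 * L) \<le> F y - F u - gradF u \<bullet> (y - u)"
proof -
  define d where "d = gradF y - gradF u"
  \<comment> \<open>test the tangent inequality at u against the point y - d/(2L), where the descent lemma at y is sharp\<close>
  define v where "v = y - (1 / (2 * L)) *\<^sub>R d"
  have tangent: "F u + gradF u \<bullet> (v - u) \<le> F v"
    by (rule convex_on_gradient_inequality[OF F_convex F_grad])
  have descent: "F v \<le> F y + gradF y \<bullet> (v - y) + L * (norm (v - y))\<^sup>2"
    using descent_lemma[OF F_grad F_lip] L_pos by simp
  have "gradF u \<bullet> (v - u) = gradF u \<bullet> (y - u) - (gradF u \<bullet> d) / (2 * L)"
    and "gradF y \<bullet> (v - y) = - (gradF y \<bullet> d) / (2 * L)"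
    and "L * (norm (v - y))\<^sup>2 = (norm d)\<^sup>2 / (4 * L)"
    using L_pos by (simp_all add: v_def inner_diff_right inner_add_right power2_eq_square field_simps)
  moreover have "gradF y \<bullet> d / (2 * L) - gradF u \<bullet> d / (2 * L) = (norm d)\<^sup>2 / (2 * L)"
    by (simp add: d_def power2_norm_eq_inner inner_diff_left diff_divide_distrib[symmetric])
  ultimately have "F u + gradF u \<bullet> (y - u) + (norm d)\<^sup>2 / (2 * L) \<le> F y + (norm d)\<^sup>2 / (4 * L)"
    using tangent descent by linarith
  moreover have "(norm d)\<^sup>2 / (2 * L) = (norm d)\<^sup>2 / (4 * L) + (norm d)\<^sup>2 / (4 * L)"
    using L_pos by (simp add: field_simps)
  ultimately show ?thesis by (simp add: d_def)
qed

lemma lipschitz_gradient_cocoercive: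
  fixes F :: "'a::real_inner \<Rightarrow> real"
  assumes F_convex: "convex_on UNIV F"
    and F_grad: "\<And>u. (F has_derivative (\<lambda>h. gradF u \<bullet> h)) (at u)"
    and F_lip: "\<And>u v. norm (gradF u - gradF v) \<le> L * norm (u - v)"
    and L_pos: "0 < L"
  shows "(norm (gradF y - gradF u))\<^sup>2 / (2 * L) \<le> (gradF y - gradF u) \<bullet> (y - u)"
  using lipschitz_gradient_bregman_lower_bound[OF assms, of y u]
    lipschitz_gradient_bregman_lower_bound[OF assms, of u y]
  by (simp add: norm_minus_commute inner_diff_left inner_diff_right field_simps)

section \<open>Subgradients, optimality conditions and quadratic growth\<close>

definition subgradient :: "('a::real_inner \<Rightarrow> ereal) \<Rightarrow> 'a \<Rightarrow> 'a \<Rightarrow> bool" where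
  "subgradient G z p \<longleftrightarrow> \<bar>G z\<bar> \<noteq> \<infinity> \<and> (\<forall>v. G z + ereal (p \<bullet> (v - z)) \<le> G v)"

lemma argmin_add_smooth_subgradient:
  fixes G :: "'a::real_inner \<Rightarrow> ereal" and \<phi> :: "'a \<Rightarrow> real"
  assumes G_convex: "ext_convex G" and G_proper: "proper_fun G"
    and zmin: "z \<in> Argmin (\<lambda>v. G v + ereal (\<phi> v))"
    and deriv: "(\<phi> has_derivative (\<lambda>h. q \<bullet> h)) (at z)"
  shows "subgradient G z (- q)"
proof -
  have min: "G z + ereal (\<phi> z) \<le> G v + ereal (\<phi> v)" for v
    using zmin by (simp add: Argmin_def)
  have not_minf: "G v \<noteq> -\<infinity>" for v
    using G_proper by (simp add: proper_fun_def)
  obtain p where "G p \<noteq> \<infinity>"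
    using G_proper by (auto simp: proper_fun_def)
  with min[of p] not_minf[of p] have "G z \<noteq> \<infinity>" by auto
  with not_minf[of z] obtain g where g: "G z = ereal g" by (cases "G z") auto
  have "ereal (g - q \<bullet> (v - z)) \<le> G v" for v
  proof (cases "G v")
    case (real gv)
    have "- q \<bullet> (v - z) \<le> gv - g"
    proof (rule directional_derivative_le[where \<phi> = "\<lambda>v. - \<phi> v"])
      show "((\<lambda>v. - \<phi> v) has_derivative (\<lambda>h. - q \<bullet> h)) (at z)"
        using deriv by (auto intro: derivative_eq_intros)
      fix s :: real assume s: "0 < s" "s < 1"
      have "G ((1 - s) *\<^sub>R z + s *\<^sub>R v) \<le> ereal (1 - s) * G z + ereal s * G v"
        using G_convex s by (simp add: ext_convex_def)
      moreover have "(1 - s) *\<^sub>R z + s *\<^sub>R v = z + s *\<^sub>R (v - z)"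
        by (simp add: algebra_simps)
      ultimately have "G (z + s *\<^sub>R (v - z)) \<le> ereal ((1 - s) * g + s * gv)"
        by (simp add: g real)
      moreover have "G z + ereal (\<phi> z) \<le> G (z + s *\<^sub>R (v - z)) + ereal (\<phi> (z + s *\<^sub>R (v - z)))"
        by (rule min)
      ultimately have "g + \<phi> z \<le> (1 - s) * g + s * gv + \<phi> (z + s *\<^sub>R (v - z))"
        using not_minf[of "z + s *\<^sub>R (v - z)"] g
        by (cases "G (z + s *\<^sub>R (v - z))") auto
      thus "- \<phi> (z + s *\<^sub>R (v - z)) - - \<phi> z \<le> s * (gv - g)"
        by (simp add: algebra_simps)
    qed
    thus ?thesis by (simp add: real)
  qed (use not_minf in auto)
  thus ?thesis by (simp add: subgradient_def g)
qed

lemma argmin_gradient_eq_zero: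
  fixes \<psi> :: "'a::real_inner \<Rightarrow> real"
  assumes "y \<in> Argmin \<psi>" and "(\<psi> has_derivative (\<lambda>h. g \<bullet> h)) (at y)"
  shows "g = 0"
proof -
  have "(\<lambda>h. g \<bullet> h) = (\<lambda>h. 0)"
    using assms by (intro differential_zero_maxmin[of y UNIV]) (auto simp: Argmin_def)
  hence "g \<bullet> g = 0" by meson
  thus ?thesis by simp
qed

lemma has_derivative_quadratic:
  fixes c :: "'a::real_inner"
  shows "((\<lambda>v. a / 2 * (norm v)\<^sup>2 + (norm (v - c))\<^sup>2 / (2 * \<gamma>))
          has_derivative (\<lambda>h. (a *\<^sub>R z + (1 / \<gamma>) *\<^sub>R (z - c)) \<bullet> h)) (at z)"
proof -
  have "((\<lambda>v. v - c) has_derivative (\<lambda>h. h)) (at z)"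
    by (auto intro!: derivative_eq_intros)
  from has_derivative_compose[OF this has_derivative_sqnorm_at]
  have "((\<lambda>v. (norm (v - c))\<^sup>2) has_derivative (\<lambda>h. 2 *\<^sub>R ((z - c) \<bullet> h))) (at z)"
    by simp
  from has_derivative_add[OF has_derivative_mult_right[OF has_derivative_sqnorm_at]
      bounded_linear.has_derivative[OF bounded_linear_divide this]]
  show ?thesis
    by (rule has_derivative_eq_rhs) (simp add: fun_eq_iff inner_add_left inner_diff_left diff_divide_distrib)
qed

lemma prox_gradient_step_optimality:
  fixes F :: "'a::real_inner \<Rightarrow> real"
  assumes F_grad: "\<And>u. (F has_derivative (\<lambda>h. gradF u \<bullet> h)) (at u)"
    and \<gamma>: "0 < \<gamma>"
    and ymin: "y \<in> Argmin (\<lambda>v. F v + a / 2 * (norm v)\<^sup>2 + (norm (v - x))\<^sup>2 / (2 * \<gamma>))"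
  shows "x = y + \<gamma> *\<^sub>R (gradF y + a *\<^sub>R y)"
proof -
  have "((\<lambda>v. F v + a / 2 * (norm v)\<^sup>2 + (norm (v - x))\<^sup>2 / (2 * \<gamma>)) has_derivative
      (\<lambda>h. (gradF y + (a *\<^sub>R y + (1 / \<gamma>) *\<^sub>R (y - x))) \<bullet> h)) (at y)"
    using has_derivative_add[OF F_grad has_derivative_quadratic]
    by (simp add: add.assoc inner_add_left)
  with ymin have "gradF y + (a *\<^sub>R y + (1 / \<gamma>) *\<^sub>R (y - x)) = 0"
    by (rule argmin_gradient_eq_zero)
  hence "\<gamma> *\<^sub>R (gradF y + (a *\<^sub>R y + (1 / \<gamma>) *\<^sub>R (y - x))) = 0"
    by simp
  hence "\<gamma> *\<^sub>R (gradF y + a *\<^sub>R y) + (y - x) = 0"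
    using \<gamma> by (simp add: scaleR_add_right add.assoc)
  thus ?thesis by (simp add: algebra_simps)
qed

lemma prox_concave_step_subgradient:
  fixes G :: "'a::real_inner \<Rightarrow> ereal"
  assumes G_convex: "ext_convex G" and G_proper: "proper_fun G"
    and zmin: "z \<in> Argmin (\<lambda>v. G v - ereal (a / 2 * (norm v)\<^sup>2) + ereal ((norm (w - v))\<^sup>2 / (2 * \<gamma>)))"
  shows "subgradient G z (a *\<^sub>R z + (1 / \<gamma>) *\<^sub>R (w - z))"
proof -
  have "(\<lambda>v. G v - ereal (a / 2 * (norm v)\<^sup>2) + ereal ((norm (w - v))\<^sup>2 / (2 * \<gamma>)))
      = (\<lambda>v. G v + ereal (- a / 2 * (norm v)\<^sup>2 + (norm (v - w))\<^sup>2 / (2 * \<gamma>)))"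
  proof
    fix v show "G v - ereal (a / 2 * (norm v)\<^sup>2) + ereal ((norm (w - v))\<^sup>2 / (2 * \<gamma>))
        = G v + ereal (- a / 2 * (norm v)\<^sup>2 + (norm (v - w))\<^sup>2 / (2 * \<gamma>))"
      by (cases "G v") (auto simp: norm_minus_commute)
  qed
  with zmin have "subgradient G z (- ((- a) *\<^sub>R z + (1 / \<gamma>) *\<^sub>R (z - w)))"
    by (intro argmin_add_smooth_subgradient[OF G_convex G_proper _ has_derivative_quadratic]) simp
  thus ?thesis by (simp add: algebra_simps)
qed

lemma subgradient_add_gradient:
  fixes F :: "'a::real_inner \<Rightarrow> real"
  assumes F_convex: "convex_on UNIV F"
    and F_grad: "\<And>u. (F has_derivative (\<lambda>h. gradF u \<bullet> h)) (at u)"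
    and G: "subgradient G z p"
  shows "subgradient (\<lambda>v. ereal (F v) + G v) z (gradF z + p)"
proof -
  obtain g where g: "G z = ereal g" using G by (cases "G z") (auto simp: subgradient_def)
  have "ereal (F z + g + (gradF z + p) \<bullet> (v - z)) \<le> ereal (F v) + G v" for v
  proof -
    have "F z + gradF z \<bullet> (v - z) \<le> F v"
      by (rule convex_on_gradient_inequality[OF F_convex F_grad])
    moreover have "ereal (g + p \<bullet> (v - z)) \<le> G v"
      using G by (simp add: subgradient_def g)
    ultimately have "ereal (F z + gradF z \<bullet> (v - z)) + ereal (g + p \<bullet> (v - z)) \<le> ereal (F v) + G v"
      by (intro add_mono) auto
    thus ?thesis by (simp add: inner_add_left algebra_simps)
  qed
  thus ?thesis by (simp add: subgradient_def g)
qed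

lemma subgradient_monotone:
  assumes "subgradient G z p" and "subgradient G u q"
  shows "0 \<le> (p - q) \<bullet> (z - u)"
proof -
  obtain gz gu where "G z = ereal gz" "G u = ereal gu"
    using assms by (cases "G z"; cases "G u") (auto simp: subgradient_def)
  moreover have "G z + ereal (p \<bullet> (u - z)) \<le> G u" "G u + ereal (q \<bullet> (z - u)) \<le> G z"
    using assms by (simp_all add: subgradient_def)
  ultimately have "gz + p \<bullet> (u - z) \<le> gu" "gu + q \<bullet> (z - u) \<le> gz"
    by simp_all
  thus ?thesis by (simp add: inner_diff_left inner_diff_right)
qed

lemma subgradient_inner_ge_of_growth:
  assumes sub: "subgradient H z g"
    and growth: "\<And>v. H u + ereal (m * (norm (v - u))\<^sup>2) \<le> H v"
  shows "m * (norm (z - u))\<^sup>2 \<le> g \<bullet> (z - u)"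
proof -
  obtain hz where hz: "H z = ereal hz" using sub by (cases "H z") (auto simp: subgradient_def)
  have lower: "ereal (hz + g \<bullet> (u - z)) \<le> H u"
    using sub by (auto simp: subgradient_def hz dest: spec[of _ u])
  moreover have upper: "H u + ereal (m * (norm (z - u))\<^sup>2) \<le> ereal hz"
    using growth[of z] by (simp add: hz)
  ultimately obtain hu where "H u = ereal hu" by (cases "H u") auto
  with lower upper show ?thesis by (simp add: inner_diff_right)
qed

lemma ext_strongly_convex_argmin_growth:
  fixes H :: "'a::real_normed_vector \<Rightarrow> ereal"
  assumes strong: "ext_strongly_convex H" and umin: "u \<in> Argmin H"
  obtains \<mu> where "0 < \<mu>" "\<And>z. H u + ereal (\<mu> / 4 * (norm (z - u))\<^sup>2) \<le> H z"
proof -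
  obtain \<mu> where \<mu>: "0 < \<mu>" and ineq: "\<And>x y l. 0 < l \<Longrightarrow> l < 1 \<Longrightarrow>
      H ((1 - l) *\<^sub>R x + l *\<^sub>R y) + ereal (\<mu> / 2 * l * (1 - l) * (norm (x - y))\<^sup>2)
        \<le> ereal (1 - l) * H x + ereal l * H y"
    using strong unfolding ext_strongly_convex_def by blast
  have "H u + ereal (\<mu> / 4 * (norm (z - u))\<^sup>2) \<le> H z" for z
  proof (cases "H z = \<infinity> \<or> H u = -\<infinity>")
    case False
    have "H u \<le> H z" using umin by (simp add: Argmin_def)
    with False obtain hu hz where hu: "H u = ereal hu" and hz: "H z = ereal hz"
      by (cases "H u"; cases "H z") auto
    define mid where "mid = (1 - 1 / 2) *\<^sub>R z + (1 / 2 :: real) *\<^sub>R u"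
    have mid: "H mid + ereal (\<mu> / 8 * (norm (z - u))\<^sup>2) \<le> ereal (hz / 2 + hu / 2)"
      using ineq[of "1 / 2" z u] by (simp add: mid_def hu hz)
    moreover have "ereal hu \<le> H mid" using umin hu by (simp add: Argmin_def)
    ultimately obtain hm where "H mid = ereal hm" "hu \<le> hm" by (cases "H mid") auto
    with mid show ?thesis by (simp add: hu hz)
  qed auto
  with \<mu> show ?thesis by (rule that)
qed

lemma argmin_unique_of_growth:
  assumes growth: "\<And>z. H u + ereal (m * (norm (z - u))\<^sup>2) \<le> H z"
    and m: "0 < m" and finite: "\<bar>H u\<bar> \<noteq> \<infinity>" and vmin: "v \<in> Argmin H"
  shows "v = u"
proof -
  obtain hu where hu: "H u = ereal hu" using finite by (cases "H u") auto
  have "H u + ereal (m * (norm (v - u))\<^sup>2) \<le> H u"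
    using growth[of v] vmin order_trans by (fastforce simp: Argmin_def)
  hence "m * (norm (v - u))\<^sup>2 \<le> 0" by (simp add: hu)
  with m show ?thesis by (simp add: mult_le_0_iff)
qed

section \<open>The minimizer of F + G\<close>

lemma lsc_fun_add_continuous:
  fixes F :: "'a::t2_space \<Rightarrow> real" and G :: "'a \<Rightarrow> ereal"
  assumes G_lsc: "lsc_fun G" and F_cont: "\<And>x. isCont F x"
  shows "lsc_fun (\<lambda>u. ereal (F u) + G u)"
  unfolding lsc_fun_def
proof (intro allI impI)
  fix x c assume lt: "c < ereal (F x) + G x"
  show "\<forall>\<^sub>F u in nhds x. c < ereal (F u) + G u"
  proof (cases c)
    case MInf
    with lt have "-\<infinity> < G x" by auto
    with G_lsc have "\<forall>\<^sub>F u in nhds x. -\<infinity> < G u" unfolding lsc_fun_def by blast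
    thus ?thesis by eventually_elim (use MInf in auto)
  next
    case (real c0)
    have "ereal (c0 - F x) < G x"
      using lt real by (cases "G x") auto
    then obtain r where r1: "ereal (c0 - F x) < ereal r" and r2: "ereal r < G x"
      using ereal_dense2 by blast
    have "\<forall>\<^sub>F u in nhds x. ereal r < G u"
      using G_lsc r2 unfolding lsc_fun_def by blast
    moreover have "(F \<longlongrightarrow> F x) (nhds x)"
      using F_cont by (simp add: isCont_def tendsto_at_iff_tendsto_nhds)
    hence "\<forall>\<^sub>F u in nhds x. c0 - r < F u"
      using r1 by (intro order_tendstoD(1)) auto
    ultimately show ?thesis
    proof eventually_elim
      case (elim u)
      hence "ereal c0 < ereal (F u) + ereal r" by simp
      also have "\<dots> \<le> ereal (F u) + G u" using elim by (intro add_left_mono) simp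
      finally show ?case using real by simp
    qed
  qed (use lt in auto)
qed

lemma lsc_fun_attains_min_on_compact:
  fixes H :: "'a::topological_space \<Rightarrow> ereal"
  assumes lsc: "lsc_fun H" and K: "compact K" "K \<noteq> {}"
  shows "\<exists>m\<in>K. \<forall>u\<in>K. H m \<le> H u"
proof (rule ccontr)
  assume "\<not> ?thesis"
  hence "\<forall>u\<in>K. \<exists>v\<in>K. H v < H u" by (auto simp: not_le)
  then obtain V where V: "\<And>u. u \<in> K \<Longrightarrow> V u \<in> K \<and> H (V u) < H u"
    by metis
  \<comment> \<open>finitely many neighbourhoods on which H exceeds H (V u) cover K; the least of these values is beaten\<close>
  have "\<forall>u\<in>K. \<exists>S. open S \<and> u \<in> S \<and> (\<forall>w\<in>S. H (V u) < H w)"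
  proof
    fix u assume "u \<in> K"
    hence "\<forall>\<^sub>F w in nhds u. H (V u) < H w"
      using V lsc unfolding lsc_fun_def by blast
    thus "\<exists>S. open S \<and> u \<in> S \<and> (\<forall>w\<in>S. H (V u) < H w)"
      by (simp add: eventually_nhds)
  qed
  then obtain S where S: "\<And>u. u \<in> K \<Longrightarrow> open (S u) \<and> u \<in> S u \<and> (\<forall>w\<in>S u. H (V u) < H w)"
    by metis
  have "K \<subseteq> (\<Union>u\<in>K. S u)" using S by blast
  then obtain T where T: "T \<subseteq> K" "finite T" "K \<subseteq> (\<Union>u\<in>T. S u)"
    using compactE_image[OF K(1), of K S] S by blast
  have "T \<noteq> {}" using T K(2) by auto
  define m where "m = Min ((\<lambda>u. H (V u)) ` T)"
  have "m \<in> (\<lambda>u. H (V u)) ` T" unfolding m_def using T \<open>T \<noteq> {}\<close> by (intro Min_in) auto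
  then obtain u0 where u0: "u0 \<in> T" "m = H (V u0)" by auto
  have "V u0 \<in> K" using V u0 T by auto
  then obtain u1 where u1: "u1 \<in> T" "V u0 \<in> S u1" using T by auto
  have "H (V u1) < H (V u0)" using S u1 T by blast
  moreover have "m \<le> H (V u1)" unfolding m_def using T u1 by (intro Min_le) auto
  ultimately show False using u0 by simp
qed

lemma coercive_lsc_fun_has_argmin:
  fixes H :: "'a::{real_normed_vector, heine_borel} \<Rightarrow> ereal"
  assumes lsc: "lsc_fun H" and coer: "coercive H" and finite: "H p \<noteq> \<infinity>"
  obtains m where "m \<in> Argmin H"
proof -
  obtain b where b: "H p < ereal b"
  proof (cases "H p")
    case (real h)
    thus ?thesis by (intro that[of "h + 1"]) simp
  qed (use finite that[of 0] in auto)
  have "\<forall>\<^sub>F u in at_infinity. ereal b < H u"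
    using coer unfolding coercive_def tendsto_PInfty by blast
  then obtain R where R: "\<And>u. R \<le> norm u \<Longrightarrow> ereal b < H u"
    by (auto simp: eventually_at_infinity)
  have "\<not> R \<le> norm p" using R[of p] b by (meson less_asym)
  hence "p \<in> cball 0 R" by simp
  then obtain m where m: "m \<in> cball 0 R" "\<And>u. u \<in> cball 0 R \<Longrightarrow> H m \<le> H u"
    using lsc_fun_attains_min_on_compact[OF lsc compact_cball, of 0 R] by blast
  have "H m \<le> H u" for u
  proof (cases "u \<in> cball 0 R")
    case False
    have "H m \<le> H p" using m(2) \<open>p \<in> cball 0 R\<close> .
    also have "\<dots> < ereal b" by (rule b)
    also have "\<dots> < H u" using R False by simp
    finally show ?thesis by (rule less_imp_le)
  qed (rule m(2))
  hence "m \<in> Argmin H" by (simp add: Argmin_def)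
  thus ?thesis by (rule that)
qed

lemma smooth_plus_strongly_convex_minimizer:
  fixes F :: "'a::euclidean_space \<Rightarrow> real" and G :: "'a \<Rightarrow> ereal"
  assumes F_grad: "\<And>u. (F has_derivative (\<lambda>h. gradF u \<bullet> h)) (at u)"
    and G_proper: "proper_fun G" and G_lsc: "lsc_fun G" and G_convex: "ext_convex G"
    and coer: "coercive (\<lambda>u. ereal (F u) + G u)"
    and strong: "ext_strongly_convex (\<lambda>u. ereal (F u) + G u)"
  obtains u m where "u \<in> Argmin (\<lambda>u. ereal (F u) + G u)"
    and "\<forall>v \<in> Argmin (\<lambda>u. ereal (F u) + G u). v = u"
    and "subgradient G u (- gradF u)" and "0 < m"
    and "\<And>v. ereal (F u) + G u + ereal (m * (norm (v - u))\<^sup>2) \<le> ereal (F v) + G v"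
proof -
  obtain p where "G p \<noteq> \<infinity>" using G_proper by (auto simp: proper_fun_def)
  hence "ereal (F p) + G p \<noteq> \<infinity>" by simp
  with lsc_fun_add_continuous[OF G_lsc has_derivative_continuous[OF F_grad]] coer
  obtain u where u: "u \<in> Argmin (\<lambda>u. ereal (F u) + G u)"
    by (rule coercive_lsc_fun_has_argmin)
  obtain \<mu> where \<mu>: "0 < \<mu> / 4"
    and growth: "\<And>v. ereal (F u) + G u + ereal (\<mu> / 4 * (norm (v - u))\<^sup>2) \<le> ereal (F v) + G v"
    using ext_strongly_convex_argmin_growth[OF strong u] by auto
  have u_sub: "subgradient G u (- gradF u)"
    using u by (intro argmin_add_smooth_subgradient[OF G_convex G_proper _ F_grad]) (simp add: add.commute)
  hence "\<forall>v \<in> Argmin (\<lambda>u. ereal (F u) + G u). v = u"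
    using argmin_unique_of_growth[OF growth \<mu>] by (auto simp: subgradient_def)
  from u this u_sub \<mu> growth show thesis by (rule that)
qed

section \<open>The one-step estimate\<close>

lemma mult_le_weighted_squares:
  fixes x y e :: real
  assumes "0 < e"
  shows "x * y \<le> e / 2 * x\<^sup>2 + y\<^sup>2 / (2 * e)"
proof -
  have "0 \<le> (e * x - y)\<^sup>2 / (2 * e)" using assms by simp
  also have "\<dots> = e / 2 * x\<^sup>2 + y\<^sup>2 / (2 * e) - x * y"
    using assms by (simp add: power2_eq_square field_simps)
  finally show ?thesis by simp
qed

lemma pr_cross_terms_bound:
  fixes L p m q A Dn Z \<beta> :: real
  assumes L: "0 < L" and p: "0 < p" "12 * p < 1" and m: "0 < m"
    and q: "0 \<le> q" "q \<le> 17 / 24" "q \<le> 17 / 12 * (m / L)"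
    and nonneg: "0 \<le> A" "0 \<le> Dn" "0 \<le> Z" and \<beta>: "\<bar>\<beta>\<bar> \<le> A * Dn"
  shows "(10 * p - q) * \<beta> + q * (L * Dn * Z) \<le> A\<^sup>2 / (8 * L) + q * (m * Z\<^sup>2) / 2 + 53 / 24 * (L * Dn\<^sup>2)"
proof -
  have "(10 * p - q) * \<beta> \<le> \<bar>10 * p - q\<bar> * \<bar>\<beta>\<bar>"
    using abs_ge_self[of "(10 * p - q) * \<beta>"] by (simp add: abs_mult)
  also have "\<dots> \<le> 5 / 6 * (A * Dn)"
  proof (rule mult_mono)
    show "\<bar>10 * p - q\<bar> \<le> 5 / 6"
      unfolding abs_le_iff using p q by linarith
  qed (use \<beta> in auto)
  also have "\<dots> = A * (5 / 6 * Dn)" by simp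
  also have "\<dots> \<le> A\<^sup>2 / (8 * L) + 25 / 18 * (L * Dn\<^sup>2)"
    using mult_le_weighted_squares[of "1 / (4 * L)" A "5 / 6 * Dn"] L
    by (simp add: power_mult_distrib field_simps)
  also have "\<dots> \<le> A\<^sup>2 / (8 * L) + 3 / 2 * (L * Dn\<^sup>2)"
    using L by simp
  finally have \<beta>_term: "(10 * p - q) * \<beta> \<le> A\<^sup>2 / (8 * L) + 3 / 2 * (L * Dn\<^sup>2)" .
  have "q * (Z * (L * Dn)) \<le> q * (m / 2 * Z\<^sup>2 + (L * Dn)\<^sup>2 / (2 * m))"
    using mult_le_weighted_squares[OF m, of Z "L * Dn"] q by (intro mult_left_mono) auto
  moreover have "q * ((L * Dn)\<^sup>2 / (2 * m)) \<le> 17 / 12 * (m / L) * ((L * Dn)\<^sup>2 / (2 * m))"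
    using q m by (intro mult_right_mono) auto
  moreover have "17 / 12 * (m / L) * ((L * Dn)\<^sup>2 / (2 * m)) = 17 / 24 * (L * Dn\<^sup>2)"
    using m L by (simp add: power2_eq_square field_simps)
  ultimately have "q * (L * Dn * Z) \<le> q * (m * Z\<^sup>2) / 2 + 17 / 24 * (L * Dn\<^sup>2)"
    by (simp add: algebra_simps)
  with \<beta>_term show ?thesis by linarith
qed

lemma pr_scalar_gain_bound:
  fixes L p m \<theta> A Dn Z \<alpha> \<beta> u S bz cz :: real
  assumes L: "0 < L" and p: "0 < p" "12 * p < 1" and m: "0 < m"
    and \<theta>: "0 < \<theta>" "\<theta> \<le> 1 / 2" "\<theta> \<le> m / L"
    and nonneg: "0 \<le> A" "0 \<le> Dn" "0 \<le> Z"
    and \<alpha>: "A\<^sup>2 / (2 * L) \<le> \<alpha>" and \<beta>: "\<bar>\<beta>\<bar> \<le> A * Dn"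
    and S: "S = (1 + 5 * p) * u + 5 * L * Dn\<^sup>2 + \<beta>"
    and bz: "bz = (1 - 5 * p) * u - \<alpha> + \<beta>" "0 \<le> bz" "m * Z\<^sup>2 \<le> bz + cz"
    and cz: "cz \<le> \<alpha> - \<beta> + L * Dn * Z"
  shows "L / 2 * Dn\<^sup>2 + A\<^sup>2 / (8 * L) + \<theta> * m / 2 * Z\<^sup>2 \<le> S"
proof -
  define P where "P = 1 + 5 * p"
  define e where "e = 1 - 5 * p"
  have P: "1 \<le> P" "P \<le> 17 / 12" and e: "7 / 12 \<le> e" "e \<le> 1"
    using p by (auto simp: P_def e_def)
  have P\<theta>: "0 \<le> P * \<theta>" "P * \<theta> \<le> 17 / 12 * (1 / 2)" "P * \<theta> \<le> 17 / 12 * (m / L)"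
    using P \<theta> by (simp_all only: mult_mono[of P "17 / 12" \<theta>]) auto
  \<comment> \<open>bz dominates the convex combination with weight \<theta> of its lower bounds 0 and m Z^2 - cz\<close>
  have "\<theta> * (m * Z\<^sup>2 - \<alpha> + \<beta> - L * Dn * Z) \<le> \<theta> * bz"
    using bz cz \<theta> by (intro mult_left_mono) auto
  also have "\<dots> \<le> bz" using bz(2) \<theta> by (simp add: mult_left_le_one_le)
  finally have "P * (\<theta> * (m * Z\<^sup>2 - \<alpha> + \<beta> - L * Dn * Z)) \<le> P * bz"
    using P by (intro mult_left_mono) auto
  hence bz_lower: "P * \<theta> * (m * Z\<^sup>2) - P * \<theta> * \<alpha> + P * \<theta> * \<beta> - P * \<theta> * (L * Dn * Z) \<le> P * bz"
    by (simp add: algebra_simps)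
  have "1 / 2 * \<alpha> \<le> (P - P * \<theta>) * \<alpha>"
  proof (rule mult_right_mono)
    show "1 / 2 \<le> P - P * \<theta>" using P \<theta> mult_left_mono[of \<theta> "1 / 2" P] by linarith
    show "0 \<le> \<alpha>" using \<alpha> L by (smt (verit) divide_nonneg_pos zero_le_power2)
  qed
  hence \<alpha>_term: "2 * (A\<^sup>2 / (8 * L)) \<le> P * \<alpha> - P * \<theta> * \<alpha>"
    using \<alpha> by (simp add: algebra_simps)
  have cross: "(10 * p - P * \<theta>) * \<beta> + P * \<theta> * (L * Dn * Z)
      \<le> A\<^sup>2 / (8 * L) + P * \<theta> * (m * Z\<^sup>2) / 2 + 53 / 24 * (L * Dn\<^sup>2)"
    using P\<theta> by (intro pr_cross_terms_bound[OF L p m _ _ _ nonneg \<beta>]) auto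
  \<comment> \<open>eliminate u between the identities for S and bz\<close>
  have "e * S = P * bz + P * \<alpha> - 10 * p * \<beta> + 5 * e * (L * Dn\<^sup>2)"
    by (simp add: S bz(1) P_def e_def algebra_simps)
  moreover have "35 / 12 * (L * Dn\<^sup>2) \<le> 5 * e * (L * Dn\<^sup>2)"
    using e L by (intro mult_right_mono) auto
  moreover have "\<theta> * m / 2 * Z\<^sup>2 \<le> P * \<theta> * (m * Z\<^sup>2) / 2"
    using P \<theta> m mult_right_mono[of 1 P "\<theta> * (m * Z\<^sup>2)"] by (simp add: algebra_simps)
  moreover have "L / 2 * Dn\<^sup>2 = 1 / 2 * (L * Dn\<^sup>2)" "0 \<le> L * Dn\<^sup>2"
    "(10 * p - P * \<theta>) * \<beta> = 10 * p * \<beta> - P * \<theta> * \<beta>"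
    using L by (simp_all add: algebra_simps)
  ultimately have lower: "L / 2 * Dn\<^sup>2 + A\<^sup>2 / (8 * L) + \<theta> * m / 2 * Z\<^sup>2 \<le> e * S"
    using bz_lower \<alpha>_term cross by linarith
  moreover have "0 \<le> L / 2 * Dn\<^sup>2 + A\<^sup>2 / (8 * L) + \<theta> * m / 2 * Z\<^sup>2"
    using L \<theta> m by simp
  ultimately have "0 \<le> e * S" by linarith
  hence "0 \<le> S" using e by (simp add: zero_le_mult_iff)
  hence "e * S \<le> S" using e by (simp add: mult_left_le_one_le)
  with lower show ?thesis by linarith
qed

lemma pr_gain_lower_bound:
  fixes dx dy dz a b c' :: "'a::real_inner" and L \<gamma> m \<theta> c :: real
  assumes L: "0 < L" and \<gamma>: "0 < \<gamma>" "12 * (L * \<gamma>) < 1" and m: "0 < m"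
    and \<theta>: "0 < \<theta>" "\<theta> \<le> 1 / 2" "\<theta> \<le> m / L"
    and c: "c \<le> L / 2" "c \<le> 1 / (8 * L)" "c \<le> \<theta> * m / 2"
    and dx: "dx = (1 + 5 * L * \<gamma>) *\<^sub>R dy + \<gamma> *\<^sub>R a"
    and b: "\<gamma> *\<^sub>R b = (5 * L * \<gamma>) *\<^sub>R dz + 2 *\<^sub>R dy - dx - dz"
    and coco: "(norm a)\<^sup>2 / (2 * L) \<le> a \<bullet> dy"
    and lip: "norm (c' - a) \<le> L * norm (dy - dz)"
    and mono: "0 \<le> b \<bullet> dz"
    and strong: "m * (norm dz)\<^sup>2 \<le> (c' + b) \<bullet> dz"
  shows "4 * \<gamma> * c * ((norm (dy - dz))\<^sup>2 + (norm a)\<^sup>2 + (norm dz)\<^sup>2)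
      \<le> (norm dx)\<^sup>2 - (norm (dx - 2 *\<^sub>R (dy - dz)))\<^sup>2"
proof -
  define D where "D = dy - dz"
  define u where "u = (D \<bullet> dz) / \<gamma>"
  define S where "S = ((norm dx)\<^sup>2 - (norm (dx - 2 *\<^sub>R D))\<^sup>2) / (4 * \<gamma>)"
  have dy: "dy = dz + D" by (simp add: D_def)
  have Du: "D \<bullet> dz = \<gamma> * u" using \<gamma> by (simp add: u_def)
  have "(norm dx)\<^sup>2 - (norm (dx - 2 *\<^sub>R D))\<^sup>2 = 4 * (dx \<bullet> D) - 4 * (norm D)\<^sup>2"
    by (simp add: power2_norm_eq_inner inner_diff_left inner_diff_right inner_commute algebra_simps)
  also have "dx \<bullet> D = (1 + 5 * L * \<gamma>) * (D \<bullet> dz) + (1 + 5 * L * \<gamma>) * (norm D)\<^sup>2 + \<gamma> * (a \<bullet> D)"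
    by (simp add: dx dy inner_add_left inner_commute power2_norm_eq_inner algebra_simps)
  finally have "S = (1 + 5 * (L * \<gamma>)) * u + 5 * L * (norm D)\<^sup>2 + a \<bullet> D"
    using \<gamma> by (simp add: S_def Du field_simps)
  moreover have "b \<bullet> dz = (1 - 5 * (L * \<gamma>)) * u - a \<bullet> dy + a \<bullet> D"
  proof -
    have "\<gamma> *\<^sub>R b = (1 - 5 * L * \<gamma>) *\<^sub>R D - \<gamma> *\<^sub>R a"
      by (simp add: b dx D_def algebra_simps scaleR_2)
    hence "\<gamma> * (b \<bullet> dz) = (1 - 5 * L * \<gamma>) * (D \<bullet> dz) - \<gamma> * (a \<bullet> dz)"
      by (metis inner_diff_left inner_scaleR_left)
    also have "a \<bullet> dz = a \<bullet> dy - a \<bullet> D" by (simp add: D_def inner_diff_right)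
    finally have "\<gamma> * (b \<bullet> dz) = \<gamma> * ((1 - 5 * (L * \<gamma>)) * u - a \<bullet> dy + a \<bullet> D)"
      by (simp add: Du algebra_simps)
    thus ?thesis using \<gamma> by simp
  qed
  moreover have "c' \<bullet> dz \<le> a \<bullet> dy - a \<bullet> D + L * norm D * norm dz"
  proof -
    have "c' \<bullet> dz = a \<bullet> dz + (c' - a) \<bullet> dz" by (simp add: inner_diff_left)
    also have "a \<bullet> dz = a \<bullet> dy - a \<bullet> D" by (simp add: D_def inner_diff_right)
    also have "(c' - a) \<bullet> dz \<le> norm (c' - a) * norm dz" by (rule norm_cauchy_schwarz)
    also have "\<dots> \<le> L * norm D * norm dz" using lip by (intro mult_right_mono) (auto simp: D_def)
    finally show ?thesis by simp
  qed
  moreover have "\<bar>a \<bullet> D\<bar> \<le> norm a * norm D" by (rule Cauchy_Schwarz_ineq2)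
  moreover have "m * (norm dz)\<^sup>2 \<le> b \<bullet> dz + c' \<bullet> dz" using strong by (simp add: inner_add_left)
  ultimately have "L / 2 * (norm D)\<^sup>2 + (norm a)\<^sup>2 / (8 * L) + \<theta> * m / 2 * (norm dz)\<^sup>2 \<le> S"
    using L \<gamma> m \<theta> coco mono
    by (intro pr_scalar_gain_bound[where p = "L * \<gamma>" and \<alpha> = "a \<bullet> dy" and \<beta> = "a \<bullet> D"
          and u = u and bz = "b \<bullet> dz" and cz = "c' \<bullet> dz"]) auto
  moreover have "c * ((norm D)\<^sup>2 + (norm a)\<^sup>2 + (norm dz)\<^sup>2)
      \<le> L / 2 * (norm D)\<^sup>2 + (norm a)\<^sup>2 / (8 * L) + \<theta> * m / 2 * (norm dz)\<^sup>2"
    using c mult_right_mono[OF c(1), of "(norm D)\<^sup>2"] mult_right_mono[OF c(2), of "(norm a)\<^sup>2"]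
      mult_right_mono[OF c(3), of "(norm dz)\<^sup>2"]
    by (simp add: algebra_simps)
  ultimately have "4 * \<gamma> * (c * ((norm D)\<^sup>2 + (norm a)\<^sup>2 + (norm dz)\<^sup>2)) \<le> 4 * \<gamma> * S"
    using \<gamma> by simp
  thus ?thesis using \<gamma> by (simp add: S_def D_def)
qed

lemma pr_contraction_of_gain:
  fixes dx dy dz a :: "'a::real_inner"
  assumes \<gamma>: "0 < \<gamma>" and c: "0 < c" and P: "0 \<le> P" "P \<le> 2"
    and dx: "dx = P *\<^sub>R dy + \<gamma> *\<^sub>R a"
    and gain: "4 * \<gamma> * c * ((norm (dy - dz))\<^sup>2 + (norm a)\<^sup>2 + (norm dz)\<^sup>2)
      \<le> (norm dx)\<^sup>2 - (norm (dx - 2 *\<^sub>R (dy - dz)))\<^sup>2"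
  shows "(norm (dx - 2 *\<^sub>R (dy - dz)))\<^sup>2 \<le> (1 - 4 * \<gamma> * c / (12 + 3 * \<gamma>\<^sup>2)) * (norm dx)\<^sup>2"
    and "(norm dy)\<^sup>2 \<le> (norm dx)\<^sup>2 / (2 * \<gamma> * c)"
    and "(norm dz)\<^sup>2 \<le> (norm dx)\<^sup>2 / (2 * \<gamma> * c)"
proof -
  define \<Sigma> where "\<Sigma> = (norm (dy - dz))\<^sup>2 + (norm a)\<^sup>2 + (norm dz)\<^sup>2"
  have sq_sum3: "(x + y + w)\<^sup>2 \<le> 3 * (x\<^sup>2 + y\<^sup>2 + w\<^sup>2)" for x y w :: real
  proof -
    have "0 \<le> (x - y)\<^sup>2 + (y - w)\<^sup>2 + (x - w)\<^sup>2" by simp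
    thus ?thesis by (simp add: power2_eq_square algebra_simps)
  qed
  have "norm dx \<le> P * norm dz + P * norm (dy - dz) + \<gamma> * norm a"
  proof -
    have "dx = P *\<^sub>R dz + P *\<^sub>R (dy - dz) + \<gamma> *\<^sub>R a" by (simp add: dx algebra_simps)
    thus ?thesis using P \<gamma>
      by (metis (no_types, opaque_lifting) abs_of_nonneg less_imp_le norm_scaleR norm_triangle_le
          norm_triangle_ineq add_right_mono)
  qed
  also have "\<dots> \<le> 2 * norm dz + 2 * norm (dy - dz) + \<gamma> * norm a"
    using P by (intro add_mono mult_right_mono) auto
  finally have "(norm dx)\<^sup>2 \<le> (2 * norm dz + 2 * norm (dy - dz) + \<gamma> * norm a)\<^sup>2"
    by (intro power_mono) auto
  also have "\<dots> \<le> 3 * ((2 * norm dz)\<^sup>2 + (2 * norm (dy - dz))\<^sup>2 + (\<gamma> * norm a)\<^sup>2)"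
    by (rule sq_sum3)
  also have "\<dots> \<le> (12 + 3 * \<gamma>\<^sup>2) * \<Sigma>"
    by (simp add: \<Sigma>_def power_mult_distrib algebra_simps)
  finally have dx_le: "(norm dx)\<^sup>2 \<le> (12 + 3 * \<gamma>\<^sup>2) * \<Sigma>" .
  hence "(norm dx)\<^sup>2 / (12 + 3 * \<gamma>\<^sup>2) \<le> \<Sigma>"
    by (simp add: divide_le_eq add_pos_nonneg mult.commute)
  hence "4 * \<gamma> * c * ((norm dx)\<^sup>2 / (12 + 3 * \<gamma>\<^sup>2)) \<le> 4 * \<gamma> * c * \<Sigma>"
    using \<gamma> c by (intro mult_left_mono) auto
  with gain show "(norm (dx - 2 *\<^sub>R (dy - dz)))\<^sup>2 \<le> (1 - 4 * \<gamma> * c / (12 + 3 * \<gamma>\<^sup>2)) * (norm dx)\<^sup>2"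
    by (simp add: \<Sigma>_def algebra_simps)
  have "4 * \<gamma> * c * \<Sigma> \<le> (norm dx)\<^sup>2"
    using gain zero_le_power2[of "norm (dx - 2 *\<^sub>R (dy - dz))"] unfolding \<Sigma>_def by linarith
  hence "\<Sigma> \<le> (norm dx)\<^sup>2 / (4 * \<gamma> * c)"
    using \<gamma> c by (simp add: le_divide_eq mult.commute)
  also have "\<dots> = (norm dx)\<^sup>2 / (2 * \<gamma> * c) / 2" by simp
  finally have \<Sigma>_le: "2 * \<Sigma> \<le> (norm dx)\<^sup>2 / (2 * \<gamma> * c)" by simp
  show "(norm dz)\<^sup>2 \<le> (norm dx)\<^sup>2 / (2 * \<gamma> * c)"
    using \<Sigma>_le zero_le_power2[of "norm (dy - dz)"] zero_le_power2[of "norm a"]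
      zero_le_power2[of "norm dz"]
    unfolding \<Sigma>_def by argo
  have "(norm dy)\<^sup>2 \<le> (norm dz + norm (dy - dz))\<^sup>2"
    using norm_triangle_ineq[of dz "dy - dz"] by (intro power_mono) auto
  also have "\<dots> \<le> 2 * ((norm dz)\<^sup>2 + (norm (dy - dz))\<^sup>2)"
    using zero_le_power2[of "norm dz - norm (dy - dz)"] by (simp add: power2_eq_square algebra_simps)
  also have "\<dots> \<le> 2 * \<Sigma>" by (simp add: \<Sigma>_def)
  finally show "(norm dy)\<^sup>2 \<le> (norm dx)\<^sup>2 / (2 * \<gamma> * c)" using \<Sigma>_le by linarith
qed

lemma modified_PR_step_gain:
  fixes F :: "'a::real_inner \<Rightarrow> real" and gradF :: "'a \<Rightarrow> 'a" and G :: "'a \<Rightarrow> ereal"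
  assumes F_convex: "convex_on UNIV F"
    and F_grad: "\<And>u. (F has_derivative (\<lambda>h. gradF u \<bullet> h)) (at u)"
    and F_lip: "\<And>u v. norm (gradF u - gradF v) \<le> L * norm (u - v)"
    and L: "0 < L" and \<gamma>: "0 < \<gamma>" "12 * (L * \<gamma>) < 1" and m: "0 < m"
    and \<theta>: "0 < \<theta>" "\<theta> \<le> 1 / 2" "\<theta> \<le> m / L"
    and c: "c \<le> L / 2" "c \<le> 1 / (8 * L)" "c \<le> \<theta> * m / 2"
    and G_proper: "proper_fun G" and G_convex: "ext_convex G"
    and u_sub: "subgradient G u (- gradF u)"
    and growth: "\<And>v. ereal (F u) + G u + ereal (m * (norm (v - u))\<^sup>2) \<le> ereal (F v) + G v"
    and ymin: "y1 \<in> Argmin (\<lambda>v. F v + 5 * L / 2 * (norm v)\<^sup>2 + (norm (v - x0))\<^sup>2 / (2 * \<gamma>))"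
    and zmin: "z1 \<in> Argmin (\<lambda>v. G v - ereal (5 * L / 2 * (norm v)\<^sup>2)
                        + ereal ((norm (2 *\<^sub>R y1 - x0 - v))\<^sup>2 / (2 * \<gamma>)))"
  defines "xb \<equiv> u + \<gamma> *\<^sub>R (gradF u + (5 * L) *\<^sub>R u)"
  shows "4 * \<gamma> * c * ((norm ((y1 - u) - (z1 - u)))\<^sup>2 + (norm (gradF y1 - gradF u))\<^sup>2 + (norm (z1 - u))\<^sup>2)
      \<le> (norm (x0 - xb))\<^sup>2 - (norm ((x0 - xb) - 2 *\<^sub>R ((y1 - u) - (z1 - u))))\<^sup>2"
proof (rule pr_gain_lower_bound[OF L \<gamma> m \<theta> c])
  define w where "w = (5 * L) *\<^sub>R z1 + (1 / \<gamma>) *\<^sub>R (2 *\<^sub>R y1 - x0 - z1)"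
  have x0: "x0 = y1 + \<gamma> *\<^sub>R (gradF y1 + (5 * L) *\<^sub>R y1)"
    by (rule prox_gradient_step_optimality[OF F_grad \<gamma>(1) ymin])
  have w: "subgradient G z1 w"
    unfolding w_def by (rule prox_concave_step_subgradient[OF G_convex G_proper zmin])
  show "x0 - xb = (1 + 5 * L * \<gamma>) *\<^sub>R (y1 - u) + \<gamma> *\<^sub>R (gradF y1 - gradF u)"
    by (simp add: x0 xb_def algebra_simps)
  show "\<gamma> *\<^sub>R (w + gradF u) = (5 * L * \<gamma>) *\<^sub>R (z1 - u) + 2 *\<^sub>R (y1 - u) - (x0 - xb) - (z1 - u)"
    using \<gamma> by (simp add: w_def xb_def algebra_simps scaleR_2)
  show "(norm (gradF y1 - gradF u))\<^sup>2 / (2 * L) \<le> (gradF y1 - gradF u) \<bullet> (y1 - u)"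
    by (rule lipschitz_gradient_cocoercive[OF F_convex F_grad F_lip L])
  show "norm ((gradF z1 - gradF u) - (gradF y1 - gradF u)) \<le> L * norm ((y1 - u) - (z1 - u))"
    using F_lip[of z1 y1] by (simp add: norm_minus_commute)
  show "0 \<le> (w + gradF u) \<bullet> (z1 - u)"
    using subgradient_monotone[OF w u_sub] by simp
  show "m * (norm (z1 - u))\<^sup>2 \<le> ((gradF z1 - gradF u) + (w + gradF u)) \<bullet> (z1 - u)"
    using subgradient_inner_ge_of_growth[OF subgradient_add_gradient[OF F_convex F_grad w] growth]
    by simp
qed

lemma modified_PR_contraction:
  fixes F :: "'a::real_inner \<Rightarrow> real" and gradF :: "'a \<Rightarrow> 'a" and G :: "'a \<Rightarrow> ereal"
    and x y z :: "nat \<Rightarrow> 'a"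
  assumes F_convex: "convex_on UNIV F"
    and F_grad: "\<And>u. (F has_derivative (\<lambda>h. gradF u \<bullet> h)) (at u)"
    and F_lip: "\<And>u v. norm (gradF u - gradF v) \<le> L * norm (u - v)"
    and L: "0 < L" and \<gamma>: "0 < \<gamma>" "12 * (L * \<gamma>) < 1" and m: "0 < m"
    and G_proper: "proper_fun G" and G_convex: "ext_convex G"
    and u_sub: "subgradient G u (- gradF u)"
    and growth: "\<And>v. ereal (F u) + G u + ereal (m * (norm (v - u))\<^sup>2) \<le> ereal (F v) + G v"
    and y_step: "\<And>t. y (Suc t) \<in> Argmin (\<lambda>v. F v + 5 * L / 2 * (norm v)\<^sup>2
                    + (norm (v - x t))\<^sup>2 / (2 * \<gamma>))"
    and z_step: "\<And>t. z (Suc t) \<in> Argmin (\<lambda>v. G v - ereal (5 * L / 2 * (norm v)\<^sup>2)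
                    + ereal ((norm (2 *\<^sub>R y (Suc t) - x t - v))\<^sup>2 / (2 * \<gamma>)))"
    and x_step: "\<And>t. x (Suc t) = x t + 2 *\<^sub>R (z (Suc t) - y (Suc t))"
  obtains r K xb where "0 < r" "r < 1" "0 < K"
    and "\<And>t. (norm (x (Suc t) - xb))\<^sup>2 \<le> r * (norm (x t - xb))\<^sup>2"
    and "\<And>t. (norm (y (Suc t) - u))\<^sup>2 \<le> K * (norm (x t - xb))\<^sup>2"
    and "\<And>t. (norm (z (Suc t) - u))\<^sup>2 \<le> K * (norm (x t - xb))\<^sup>2"
proof -
  define \<theta> where "\<theta> = min (1 / 2) (m / L)"
  define c where "c = min (min (L / 2) (1 / (8 * L))) (\<theta> * m / 2)"
  \<comment> \<open>the fixed point of the iteration: the y-update maps it to the minimizer u\<close>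
  define xb where "xb = u + \<gamma> *\<^sub>R (gradF u + (5 * L) *\<^sub>R u)"
  have \<theta>: "0 < \<theta>" "\<theta> \<le> 1 / 2" "\<theta> \<le> m / L" using m L by (auto simp: \<theta>_def min_def)
  have c: "0 < c" "c \<le> L / 2" "c \<le> 1 / (8 * L)" "c \<le> \<theta> * m / 2"
    using L m \<theta> by (auto simp: c_def)
  have "4 * \<gamma> * c \<le> 2 * (L * \<gamma>)" using c(2) \<gamma> by simp
  hence "4 * \<gamma> * c < 12 + 3 * \<gamma>\<^sup>2" using \<gamma> zero_le_power2[of \<gamma>] by linarith
  hence r: "0 < 1 - 4 * \<gamma> * c / (12 + 3 * \<gamma>\<^sup>2)" "1 - 4 * \<gamma> * c / (12 + 3 * \<gamma>\<^sup>2) < 1"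
    using \<gamma> c by (simp_all add: add_pos_nonneg)
  have P: "0 \<le> 1 + 5 * L * \<gamma>" "1 + 5 * L * \<gamma> \<le> 2" using L \<gamma> by simp_all
  have dx: "x t - xb = (1 + 5 * L * \<gamma>) *\<^sub>R (y (Suc t) - u) + \<gamma> *\<^sub>R (gradF (y (Suc t)) - gradF u)"
    for t
    using prox_gradient_step_optimality[OF F_grad \<gamma>(1) y_step] by (simp add: xb_def algebra_simps)
  have contr: "(norm ((x t - xb) - 2 *\<^sub>R ((y (Suc t) - u) - (z (Suc t) - u))))\<^sup>2
          \<le> (1 - 4 * \<gamma> * c / (12 + 3 * \<gamma>\<^sup>2)) * (norm (x t - xb))\<^sup>2"
    "(norm (y (Suc t) - u))\<^sup>2 \<le> (norm (x t - xb))\<^sup>2 / (2 * \<gamma> * c)"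
    "(norm (z (Suc t) - u))\<^sup>2 \<le> (norm (x t - xb))\<^sup>2 / (2 * \<gamma> * c)" for t
    using pr_contraction_of_gain[OF \<gamma>(1) c(1) P dx]
      modified_PR_step_gain[OF F_convex F_grad F_lip L \<gamma> m \<theta> c(2-4) G_proper G_convex u_sub growth
        y_step z_step]
    unfolding xb_def by blast+
  show thesis
  proof (rule that[OF r, of "1 / (2 * \<gamma> * c)" xb])
    show "0 < 1 / (2 * \<gamma> * c)" using \<gamma> c by simp
    fix t
    have "x (Suc t) - xb = (x t - xb) - 2 *\<^sub>R ((y (Suc t) - u) - (z (Suc t) - u))"
      by (simp add: x_step algebra_simps)
    thus "(norm (x (Suc t) - xb))\<^sup>2 \<le> (1 - 4 * \<gamma> * c / (12 + 3 * \<gamma>\<^sup>2)) * (norm (x t - xb))\<^sup>2"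
      using contr(1)[of t] by (simp only:)
    show "(norm (y (Suc t) - u))\<^sup>2 \<le> 1 / (2 * \<gamma> * c) * (norm (x t - xb))\<^sup>2"
      "(norm (z (Suc t) - u))\<^sup>2 \<le> 1 / (2 * \<gamma> * c) * (norm (x t - xb))\<^sup>2"
      using contr(2,3) by simp_all
  qed
qed

section \<open>Linear convergence\<close>

lemma geometric_bound_of_contraction:
  fixes x y z :: "nat \<Rightarrow> 'a::real_normed_vector"
  assumes r: "0 < r" and K: "0 \<le> K"
    and x: "\<And>t. (norm (x (Suc t) - xb))\<^sup>2 \<le> r * (norm (x t - xb))\<^sup>2"
    and y: "\<And>t. (norm (y (Suc t) - yb))\<^sup>2 \<le> K * (norm (x t - xb))\<^sup>2"
    and z: "\<And>t. (norm (z (Suc t) - zb))\<^sup>2 \<le> K * (norm (x t - xb))\<^sup>2"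
  obtains M where "0 < M" and "\<And>t. 1 \<le> t \<Longrightarrow>
    max ((norm (y t - yb))\<^sup>2) (max ((norm (z t - zb))\<^sup>2) ((norm (x t - xb))\<^sup>2)) \<le> M * r ^ t"
proof -
  define E where "E = (norm (x 0 - xb))\<^sup>2"
  define M where "M = max (K * E / r) E + 1"
  have xE: "(norm (x t - xb))\<^sup>2 \<le> E * r ^ t" for t
  proof (induction t)
    case (Suc t)
    have "(norm (x (Suc t) - xb))\<^sup>2 \<le> r * (norm (x t - xb))\<^sup>2" by (rule x)
    also have "\<dots> \<le> r * (E * r ^ t)" using Suc r by (intro mult_left_mono) auto
    finally show ?case by (simp add: algebra_simps)
  qed (simp add: E_def)
  have "M * r ^ t \<ge> max ((norm (y t - yb))\<^sup>2) (max ((norm (z t - zb))\<^sup>2) ((norm (x t - xb))\<^sup>2))"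
    if "1 \<le> t" for t
  proof -
    obtain s where s: "t = Suc s" using \<open>1 \<le> t\<close> by (cases t) auto
    have "K * (norm (x s - xb))\<^sup>2 \<le> K * (E * r ^ s)" using xE K by (intro mult_left_mono)
    also have "\<dots> = K * E / r * r ^ t" using r by (simp add: s)
    also have "\<dots> \<le> M * r ^ t" using r by (intro mult_right_mono) (auto simp: M_def)
    finally have "(norm (y t - yb))\<^sup>2 \<le> M * r ^ t" "(norm (z t - zb))\<^sup>2 \<le> M * r ^ t"
      using y[of s] z[of s] by (simp_all add: s)
    moreover have "E * r ^ t \<le> M * r ^ t" using r by (intro mult_right_mono) (auto simp: M_def)
    hence "(norm (x t - xb))\<^sup>2 \<le> M * r ^ t" using xE[of t] by linarith
    ultimately show ?thesis by simp
  qed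
  moreover have "0 \<le> E" by (simp add: E_def)
  hence "0 < M" unfolding M_def using max.cobounded2[of "K * E / r" E] by linarith
  ultimately show thesis using that by blast
qed

lemma LIMSEQ_of_power2_norm_le_geometric:
  fixes f :: "nat \<Rightarrow> 'a::real_normed_vector"
  assumes bound: "\<And>t. 1 \<le> t \<Longrightarrow> (norm (f t - l))\<^sup>2 \<le> M * r ^ t" and r: "0 \<le> r" "r < 1"
  shows "f \<longlonglongrightarrow> l"
proof -
  have "(\<lambda>t. sqrt (M * r ^ t)) \<longlonglongrightarrow> sqrt (M * 0)"
    using r by (intro tendsto_real_sqrt tendsto_mult tendsto_const LIMSEQ_power_zero) auto
  hence "(\<lambda>t. sqrt (M * r ^ t)) \<longlonglongrightarrow> 0" by simp
  moreover have "\<forall>\<^sub>F t in sequentially. norm (f t - l) \<le> sqrt (M * r ^ t)"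
    unfolding eventually_sequentially
  proof (intro exI allI impI)
    fix t :: nat assume "1 \<le> t"
    hence "sqrt ((norm (f t - l))\<^sup>2) \<le> sqrt (M * r ^ t)" using bound by (intro real_sqrt_le_mono) auto
    thus "norm (f t - l) \<le> sqrt (M * r ^ t)" by simp
  qed
  ultimately have "(\<lambda>t. f t - l) \<longlonglongrightarrow> 0" by (rule Lim_null_comparison[rotated])
  thus ?thesis by (simp add: LIM_zero_iff)
qed

theorem proposition1:
  fixes F :: "'a::euclidean_space \<Rightarrow> real"
    and gradF :: "'a \<Rightarrow> 'a"
    and G :: "'a \<Rightarrow> ereal"
    and L \<gamma> :: real
    and x y z :: "nat \<Rightarrow> 'a"
  assumes F_convex: "convex_on UNIV F"
    and F_grad: "\<And>u. (F has_derivative (\<lambda>h. gradF u \<bullet> h)) (at u)"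
    and L_pos: "L > 0"
    and F_lip: "\<And>u v. norm (gradF u - gradF v) \<le> L * norm (u - v)"
    and G_proper: "proper_fun G"
    and G_lsc: "lsc_fun G"
    and G_prox: "\<And>w \<tau>. \<tau> > 0 \<Longrightarrow>
        Argmin (\<lambda>u. ereal \<tau> * G u + ereal ((norm (u - w))\<^sup>2 / 2)) \<noteq> {}"
    and coer: "coercive (\<lambda>u. ereal (F u) + G u)"
    and G_convex: "ext_convex G"
    and FG_strong: "ext_strongly_convex (\<lambda>u. ereal (F u) + G u)"
    and gamma: "0 < \<gamma>" "\<gamma> < 1 / (12 * L)"
    and y_step: "\<And>t. y (Suc t) \<in> Argmin (\<lambda>v. F v + 5 * L / 2 * (norm v)\<^sup>2
                    + (norm (v - x t))\<^sup>2 / (2 * \<gamma>))"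
    and z_step: "\<And>t. z (Suc t) \<in> Argmin (\<lambda>v. G v - ereal (5 * L / 2 * (norm v)\<^sup>2)
                    + ereal ((norm (2 *\<^sub>R y (Suc t) - x t - v))\<^sup>2 / (2 * \<gamma>)))"
    and x_step: "\<And>t. x (Suc t) = x t + 2 *\<^sub>R (z (Suc t) - y (Suc t))"
  shows "\<exists>yb zb xb. yb = zb
           \<and> zb \<in> Argmin (\<lambda>u. ereal (F u) + G u)
           \<and> (\<forall>u \<in> Argmin (\<lambda>u. ereal (F u) + G u). u = zb)
           \<and> y \<longlonglongrightarrow> yb \<and> z \<longlonglongrightarrow> zb \<and> x \<longlonglongrightarrow> xb
           \<and> (\<exists>M r. M > 0 \<and> 0 < r \<and> r < 1 \<and>
                (\<forall>t\<ge>1. max ((norm (y t - yb))\<^sup>2) (max ((norm (z t - zb))\<^sup>2) ((norm (x t - xb))\<^sup>2))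
                        \<le> M * r ^ t))"
proof -
  \<comment> \<open>G_prox only makes the z-update well defined; here the iterates are given\<close>
  obtain u m where u: "u \<in> Argmin (\<lambda>u. ereal (F u) + G u)"
    and unique: "\<forall>v \<in> Argmin (\<lambda>u. ereal (F u) + G u). v = u"
    and u_sub: "subgradient G u (- gradF u)" and m: "0 < m"
    and growth: "\<And>v. ereal (F u) + G u + ereal (m * (norm (v - u))\<^sup>2) \<le> ereal (F v) + G v"
    by (rule smooth_plus_strongly_convex_minimizer[OF F_grad G_proper G_lsc G_convex coer FG_strong]) blast
  have \<gamma>: "12 * (L * \<gamma>) < 1" using gamma L_pos by (simp add: field_simps)
  obtain r K xb where r: "0 < r" "r < 1" and K: "0 < K"
    and contraction: "\<And>t. (norm (x (Suc t) - xb))\<^sup>2 \<le> r * (norm (x t - xb))\<^sup>2"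
      "\<And>t. (norm (y (Suc t) - u))\<^sup>2 \<le> K * (norm (x t - xb))\<^sup>2"
      "\<And>t. (norm (z (Suc t) - u))\<^sup>2 \<le> K * (norm (x t - xb))\<^sup>2"
    by (rule modified_PR_contraction[where x = x and y = y and z = z and u = u,
          OF F_convex F_grad F_lip L_pos gamma(1) \<gamma> m G_proper G_convex u_sub growth
          y_step z_step x_step]) blast
  obtain M where M: "0 < M" and bound: "\<And>t. 1 \<le> t \<Longrightarrow>
      max ((norm (y t - u))\<^sup>2) (max ((norm (z t - u))\<^sup>2) ((norm (x t - xb))\<^sup>2)) \<le> M * r ^ t"
    by (rule geometric_bound_of_contraction[where x = x and y = y and z = z,
          OF r(1) less_imp_le[OF K] contraction]) blast
  have bounds: "(norm (y t - u))\<^sup>2 \<le> M * r ^ t \<and> (norm (z t - u))\<^sup>2 \<le> M * r ^ t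
      \<and> (norm (x t - xb))\<^sup>2 \<le> M * r ^ t" if "1 \<le> t" for t
    using bound[OF that] by (simp only: max.bounded_iff)
  note limit = LIMSEQ_of_power2_norm_le_geometric[OF _ less_imp_le[OF r(1)] r(2)]
  have "y \<longlonglongrightarrow> u" "z \<longlonglongrightarrow> u" "x \<longlonglongrightarrow> xb"
    by (rule limit; use bounds in blast)+
  moreover have "\<exists>M r. M > 0 \<and> 0 < r \<and> r < 1 \<and> (\<forall>t\<ge>1.
      max ((norm (y t - u))\<^sup>2) (max ((norm (z t - u))\<^sup>2) ((norm (x t - xb))\<^sup>2)) \<le> M * r ^ t)"
    using M r bound by (intro exI[of _ M] exI[of _ r]) simp
  ultimately show ?thesis using u unique by blast
qed

end
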